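(* Let $f\colon X\to Y$ be a continuous function between compact Hausdorff spaces. (1) For every $V\in\mathsf{RO}(Y)$, $\mathrm{int}(\mathrm{cl}(f^{-1}[V]))=\bigvee\{U\in\mathsf{RO}(X)\mid f[\mathrm{cl}(U)]\subseteq V\}$, the join computed in $\mathsf{RO}(X)$. (2) For every $U\in\mathsf{RO}(X)$ and $V\in\mathsf{RO}(Y)$, $f[\mathrm{cl}(U)]\subseteq V$ if and only if there is $V'\in\mathsf{RO}(Y)$ with $\mathrm{cl}(V')\subseteq V$ and $U\subseteq\mathrm{int}(\mathrm{cl}(f^{-1}[V']))$.
   Context: $\mathsf{RO}(X)$ denotes the complete boolean algebra of regular open subsets of $X$ (sets $U$ with $U=\mathrm{int}(\mathrm{cl}(U))$), with joins $\bigvee_i U_i=\mathrm{int}(\mathrm{cl}(\bigcup_i U_i))$. *)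

theory Defs
  imports "HOL-Analysis.Analysis"
begin

definition regular_open :: "'a topology \<Rightarrow> 'a set \<Rightarrow> bool" where
  "regular_open X U \<longleftrightarrow> X interior_of (X closure_of U) = U"

definition ro_join :: "'a topology \<Rightarrow> 'a set set \<Rightarrow> 'a set" where
  "ro_join X \<U> = X interior_of (X closure_of (\<Union>\<U>))"

end

theory Submission
  imports Defs
begin

text \<open>In a regular space every compact K inside an open P has an open neighbourhood W with
cl W \<subseteq> P, and replacing W by the regular open int(cl W) does not change its closure. For points
this writes the open preimage of V as the union of the regular opens U with f[cl U] \<subseteq> V, which
is (1). For the compact set f[cl U] it yields the V' of (2); conversely U \<subseteq> int(cl(f^-1[V']))
gives f[cl U] \<subseteq> cl V' by continuity.\<close>

lemma regular_open_imp_openin: "regular_open X U \<Longrightarrow> openin X U"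
  unfolding regular_open_def by (metis openin_interior_of)

lemma openin_subset_interior_of_closure_of:
  "openin X W \<Longrightarrow> W \<subseteq> X interior_of (X closure_of W)"
  by (meson closure_of_subset interior_of_maximal openin_subset)

lemma regular_open_interior_of_closure_of:
  "regular_open X (X interior_of (X closure_of S))"
proof -
  let ?R = "X interior_of (X closure_of S)"
  have "X closure_of ?R \<subseteq> X closure_of S"
    by (metis closedin_closure_of closure_of_minimal interior_of_subset)
  then have "X interior_of (X closure_of ?R) \<subseteq> ?R"
    by (rule interior_of_mono)
  moreover have "?R \<subseteq> X interior_of (X closure_of ?R)"
    by (simp add: openin_subset_interior_of_closure_of)
  ultimately show ?thesis
    unfolding regular_open_def by blast
qed

lemma closure_of_interior_of_closure_of_open:
  assumes "openin X W"
  shows "X closure_of (X interior_of (X closure_of W)) = X closure_of W"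
proof
  show "X closure_of (X interior_of (X closure_of W)) \<subseteq> X closure_of W"
    by (metis closedin_closure_of closure_of_minimal interior_of_subset)
  show "X closure_of W \<subseteq> X closure_of (X interior_of (X closure_of W))"
    by (simp add: assms closure_of_mono openin_subset_interior_of_closure_of)
qed

lemma regular_space_compact_open_shrink:
  assumes "regular_space X" "compactin X K" "openin X P" "K \<subseteq> P"
  obtains W where "openin X W" "K \<subseteq> W" "X closure_of W \<subseteq> P"
proof -
  have "closedin X (topspace X - P)" "disjnt K (topspace X - P)"
    using assms(3,4) by (auto simp: disjnt_def)
  then obtain W W' where W: "openin X W" "openin X W'" "K \<subseteq> W"
      "topspace X - P \<subseteq> W'" "disjnt W W'"
    using regular_space_compact_closed_separation assms(1,2) by metis
  have "X closure_of W \<subseteq> topspace X - W'"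
    using W(1,2,5) by (intro closure_of_minimal) (auto simp: disjnt_def dest: openin_subset)
  with W(4) have "X closure_of W \<subseteq> P"
    by blast
  with W(1,3) show ?thesis
    using that by blast
qed

lemma regular_space_compact_regular_open_shrink:
  assumes "regular_space X" "compactin X K" "openin X P" "K \<subseteq> P"
  obtains R where "regular_open X R" "K \<subseteq> R" "X closure_of R \<subseteq> P"
proof -
  obtain W where W: "openin X W" "K \<subseteq> W" "X closure_of W \<subseteq> P"
    using regular_space_compact_open_shrink assms by blast
  show ?thesis
  proof
    show "regular_open X (X interior_of (X closure_of W))"
      by (rule regular_open_interior_of_closure_of)
    show "K \<subseteq> X interior_of (X closure_of W)"
      using W(1,2) openin_subset_interior_of_closure_of by blast
    show "X closure_of (X interior_of (X closure_of W)) \<subseteq> P"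
      using W(1,3) by (simp add: closure_of_interior_of_closure_of_open)
  qed
qed

lemma regular_space_Union_regular_open_closure_subset:
  assumes "regular_space X" "openin X P"
  shows "\<Union>{U. regular_open X U \<and> X closure_of U \<subseteq> P} = P"
proof
  show "\<Union>{U. regular_open X U \<and> X closure_of U \<subseteq> P} \<subseteq> P"
  proof (rule Union_least)
    fix U assume "U \<in> {U. regular_open X U \<and> X closure_of U \<subseteq> P}"
    then show "U \<subseteq> P"
      using closure_of_subset[OF openin_subset[OF regular_open_imp_openin]] by blast
  qed
  show "P \<subseteq> \<Union>{U. regular_open X U \<and> X closure_of U \<subseteq> P}"
  proof
    fix x assume "x \<in> P"
    then have "compactin X {x}" "{x} \<subseteq> P"
      using openin_subset[OF assms(2)] by auto
    then obtain U where "regular_open X U" "{x} \<subseteq> U" "X closure_of U \<subseteq> P"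
      using regular_space_compact_regular_open_shrink[OF assms(1) _ assms(2)] by blast
    then show "x \<in> \<Union>{U. regular_open X U \<and> X closure_of U \<subseteq> P}"
      by blast
  qed
qed

lemma openin_topspace_Int_vimage:
  assumes "continuous_map X Y f" "openin Y V"
  shows "openin X (topspace X \<inter> f -` V)"
proof -
  have "topspace X \<inter> f -` V = {x \<in> topspace X. f x \<in> V}"
    by blast
  then show ?thesis
    using openin_continuous_map_preimage[OF assms] by (simp only:)
qed

lemma interior_of_closure_of_vimage_eq_ro_join:
  assumes "regular_space X" "continuous_map X Y f" "openin Y V"
  shows "X interior_of (X closure_of (topspace X \<inter> f -` V))
           = ro_join X {U. regular_open X U \<and> f ` (X closure_of U) \<subseteq> V}"
proof -
  have "f ` (X closure_of U) \<subseteq> V \<longleftrightarrow> X closure_of U \<subseteq> topspace X \<inter> f -` V" for U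
    using closure_of_subset_topspace[of X U] by blast
  then have "{U. regular_open X U \<and> f ` (X closure_of U) \<subseteq> V}
               = {U. regular_open X U \<and> X closure_of U \<subseteq> topspace X \<inter> f -` V}"
    by simp
  moreover have "\<Union>{U. regular_open X U \<and> X closure_of U \<subseteq> topspace X \<inter> f -` V}
                   = topspace X \<inter> f -` V"
    by (rule regular_space_Union_regular_open_closure_subset
        [OF assms(1) openin_topspace_Int_vimage[OF assms(2,3)]])
  ultimately show ?thesis
    unfolding ro_join_def by simp
qed

lemma image_closure_of_subset_iff_regular_open:
  assumes "compact_space X" "regular_space Y" "continuous_map X Y f"
    and "U \<subseteq> topspace X" "openin Y V"
  shows "f ` (X closure_of U) \<subseteq> V \<longleftrightarrow>
           (\<exists>V'. regular_open Y V' \<and> Y closure_of V' \<subseteq> V \<and>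
                 U \<subseteq> X interior_of (X closure_of (topspace X \<inter> f -` V')))"
proof
  assume "f ` (X closure_of U) \<subseteq> V"
  moreover have "compactin Y (f ` (X closure_of U))"
    by (intro image_compactin[OF _ assms(3)] closedin_compact_space[OF assms(1)]
        closedin_closure_of)
  ultimately obtain V' where V': "regular_open Y V'" "f ` (X closure_of U) \<subseteq> V'"
      "Y closure_of V' \<subseteq> V"
    using regular_space_compact_regular_open_shrink assms(2,5) by blast
  have "U \<subseteq> topspace X \<inter> f -` V'"
    using V'(2) closure_of_subset[OF assms(4)] assms(4) by blast
  also have "\<dots> \<subseteq> X interior_of (X closure_of (topspace X \<inter> f -` V'))"
    by (intro openin_subset_interior_of_closure_of openin_topspace_Int_vimage[OF assms(3)]
        regular_open_imp_openin[OF V'(1)])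
  finally show "\<exists>V'. regular_open Y V' \<and> Y closure_of V' \<subseteq> V \<and>
                 U \<subseteq> X interior_of (X closure_of (topspace X \<inter> f -` V'))"
    using V' by blast
next
  assume "\<exists>V'. regular_open Y V' \<and> Y closure_of V' \<subseteq> V \<and>
                 U \<subseteq> X interior_of (X closure_of (topspace X \<inter> f -` V'))"
  then obtain V' where V': "Y closure_of V' \<subseteq> V"
      "U \<subseteq> X interior_of (X closure_of (topspace X \<inter> f -` V'))"
    by (elim exE conjE)
  have "U \<subseteq> X closure_of (topspace X \<inter> f -` V')"
    using V'(2) interior_of_subset by (rule order_trans)
  then have "X closure_of U \<subseteq> X closure_of (topspace X \<inter> f -` V')"
    by (metis closure_of_closure_of closure_of_mono)
  then have "f ` (X closure_of U) \<subseteq> f ` (X closure_of (topspace X \<inter> f -` V'))"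
    by (rule image_mono)
  also have "\<dots> \<subseteq> Y closure_of (f ` (topspace X \<inter> f -` V'))"
    using assms(3) by (rule continuous_map_image_closure_subset)
  also have "\<dots> \<subseteq> Y closure_of V'"
    by (rule closure_of_mono) blast
  finally show "f ` (X closure_of U) \<subseteq> V"
    using V'(1) by blast
qed

theorem proposition6p12:
  fixes X :: "'a topology" and Y :: "'b topology" and f :: "'a \<Rightarrow> 'b"
  assumes "compact_space X" and "Hausdorff_space X"
    and "compact_space Y" and "Hausdorff_space Y"
    and "continuous_map X Y f"
  shows "(\<forall>V. regular_open Y V \<longrightarrow>
            X interior_of (X closure_of (topspace X \<inter> f -` V))
              = ro_join X {U. regular_open X U \<and> f ` (X closure_of U) \<subseteq> V})
       \<and> (\<forall>U V. regular_open X U \<longrightarrow> regular_open Y V \<longrightarrow>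
            (f ` (X closure_of U) \<subseteq> V \<longleftrightarrow>
              (\<exists>V'. regular_open Y V' \<and> Y closure_of V' \<subseteq> V \<and>
                    U \<subseteq> X interior_of (X closure_of (topspace X \<inter> f -` V')))))"
proof -
  have X: "regular_space X" and Y: "regular_space Y"
    using assms(1-4) compact_Hausdorff_imp_regular_space by auto
  show ?thesis
  proof (intro conjI allI impI)
    fix V assume "regular_open Y V"
    then show "X interior_of (X closure_of (topspace X \<inter> f -` V))
                 = ro_join X {U. regular_open X U \<and> f ` (X closure_of U) \<subseteq> V}"
      by (intro interior_of_closure_of_vimage_eq_ro_join[OF X assms(5)]
          regular_open_imp_openin)
  next
    fix U V assume "regular_open X U" "regular_open Y V"
    then show "f ` (X closure_of U) \<subseteq> V \<longleftrightarrow>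
                 (\<exists>V'. regular_open Y V' \<and> Y closure_of V' \<subseteq> V \<and>
                       U \<subseteq> X interior_of (X closure_of (topspace X \<inter> f -` V')))"
      by (intro image_closure_of_subset_iff_regular_open[OF assms(1) Y assms(5)]
          openin_subset regular_open_imp_openin)
  qed
qed

end
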